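(* Let $\gamma:[0,l]\times[0,w)\to E_1^4$, $(s,t)\mapsto\gamma(s,t)$, be a smooth inextensible one-parameter family of partially null curves in $E_1^4$ parametrized by arclength ($\|\partial\gamma/\partial s\|\equiv1$), with Frenet frame $\{T,N,B_1,B_2\}$, curvatures $k_1,k_2$ (and $k_3\equiv0$), and write $$\frac{\partial\gamma}{\partial t}=\beta_1T+\beta_2N+\beta_3B_1+\beta_4B_2$$ with smooth scalar functions $\beta_i$. Then $$\frac{\partial k_1}{\partial t}=\frac{\partial^2\beta_2}{\partial s^2}+\frac{\partial(\beta_1k_1)}{\partial s}-\frac{\partial(\beta_4k_2)}{\partial s}-\frac{\partial\beta_4}{\partial s}k_2.$$
   Context: $E_1^4$ is $\mathbb{R}^4$ with the Lorentzian metric $\langle x,y\rangle=-x_1y_1+x_2y_2+x_3y_3+x_4y_4$ and $\|x\|=\sqrt{|\langle x,x\rangle|}$. A partially null curve is a spacelike curve whose first binormal is a null vector. For such a curve parametrized by arclength $s$, its Frenet frame $\{T,N,B_1,B_2\}$ ($T=\partial\gamma/\partial s$) satisfies $\langle T,T\rangle=\langle N,N\rangle=1$, $\langle B_1,B_1\rangle=\langle B_2,B_2\rangle=0$, $\langle B_1,B_2\rangle=1$, all other inner products zero, and the Frenet equations $T'=k_1N$, $N'=-k_1T+k_2B_1$, $B_1'=k_3B_1$, $B_2'=-k_2N-k_3B_2$, with $k_3\equiv0$. In the family, each $s\mapsto\gamma(s,t)$ is such a curve and frame and curvatures are smooth in $(s,t)$. The flow is inextensible if $\frac{\partial}{\partial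 t}\|\partial\gamma/\partial u\|=0$. *)

theory Defs
  imports "HOL-Analysis.Analysis"
begin

definition linner :: "real^4 \<Rightarrow> real^4 \<Rightarrow> real" where
  "linner x y = - x$1 * y$1 + x$2 * y$2 + x$3 * y$3 + x$4 * y$4"

definition lnorm :: "real^4 \<Rightarrow> real" where
  "lnorm x = sqrt \<bar>linner x x\<bar>"

definition ds :: "(real \<times> real \<Rightarrow> 'a::real_normed_vector) \<Rightarrow> real \<times> real \<Rightarrow> 'a" where
  "ds f p = vector_derivative (\<lambda>\<sigma>. f (\<sigma>, snd p)) (at (fst p))"

definition dt :: "(real \<times> real \<Rightarrow> 'a::real_normed_vector) \<Rightarrow> real \<times> real \<Rightarrow> 'a" where
  "dt f p = vector_derivative (\<lambda>\<tau>. f (fst p, \<tau>)) (at (snd p))"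

fun Ck_on :: "nat \<Rightarrow> (real \<times> real) set \<Rightarrow> (real \<times> real \<Rightarrow> 'a::real_normed_vector) \<Rightarrow> bool" where
  "Ck_on 0 U f = continuous_on U f"
| "Ck_on (Suc k) U f = (f differentiable_on U \<and> Ck_on k U (ds f) \<and> Ck_on k U (dt f))"

definition smooth_on :: "(real \<times> real) set \<Rightarrow> (real \<times> real \<Rightarrow> 'a::real_normed_vector) \<Rightarrow> bool" where
  "smooth_on U f = (\<forall>k. Ck_on k U f)"

end

theory Submission
  imports Defs
begin

text \<open>Since \<open>T = \<partial>\<gamma>/\<partial>s\<close> and mixed partial derivatives commute, \<open>\<partial>T/\<partial>t\<close> is the \<open>s\<close>-derivative of
  \<open>\<partial>\<gamma>/\<partial>t = \<beta>1 T + \<beta>2 N + \<beta>3 B1 + \<beta>4 B2\<close>, which the Frenet equations expand as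
  \<open>(\<beta>1' - \<beta>2 k1) T + (\<beta>1 k1 + \<beta>2' - \<beta>4 k2) N + (\<beta>2 k2 + \<beta>3') B1 + \<beta>4' B2\<close>.
  As \<open>\<langle>T,T\<rangle> = 1\<close> for all \<open>t\<close>, the \<open>T\<close>-coefficient vanishes. Differentiating
  \<open>k1 = \<langle>T', N\<rangle>\<close> in \<open>t\<close> and using \<open>\<langle>N, \<partial>N/\<partial>t\<rangle> = 0\<close> gives \<open>\<partial>k1/\<partial>t = \<langle>(\<partial>T/\<partial>t)', N\<rangle>\<close>,
  and the \<open>N\<close>-component of \<open>(\<partial>T/\<partial>t)'\<close> is read off by applying the Frenet equations once more.\<close>

lemma has_vector_derivative_unique_on:
  fixes f g :: "real \<Rightarrow> 'a::real_normed_vector"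
  assumes f: "(f has_vector_derivative f') (at x within S)"
    and g: "(g has_vector_derivative g') (at x within S)"
    and "x \<in> S" "x islimpt S" "\<And>y. y \<in> S \<Longrightarrow> f y = g y"
  shows "f' = g'"
proof -
  have "(g has_vector_derivative f') (at x within S)"
    using has_vector_derivative_transform[OF \<open>x \<in> S\<close> _ f] assms(5) by metis
  then show ?thesis
    using vector_derivative_unique_within[OF _ _ g] \<open>x islimpt S\<close> trivial_limit_within by blast
qed

lemma has_vector_derivative_ds:
  assumes "f differentiable (at (s,t))"
  shows "((\<lambda>\<sigma>. f (\<sigma>,t)) has_vector_derivative ds f (s,t)) (at s)"
proof -
  have "(\<lambda>\<sigma>. f (\<sigma>,t)) differentiable (at s)"
    using differentiable_chain_at[of "\<lambda>\<sigma>. (\<sigma>,t)" s f] assms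
    by (simp add: o_def differentiable_Pair)
  then show ?thesis
    unfolding ds_def by (simp add: vector_derivative_works[symmetric])
qed

lemma has_vector_derivative_dt:
  assumes "f differentiable (at (s,t))"
  shows "((\<lambda>\<tau>. f (s,\<tau>)) has_vector_derivative dt f (s,t)) (at t)"
proof -
  have "(\<lambda>\<tau>. f (s,\<tau>)) differentiable (at t)"
    using differentiable_chain_at[of "\<lambda>\<tau>. (s,\<tau>)" t f] assms
    by (simp add: o_def differentiable_Pair)
  then show ?thesis
    unfolding dt_def by (simp add: vector_derivative_works[symmetric])
qed

lemma ds_eq_on_slice:
  assumes "f differentiable (at (s,t))" "g differentiable (at (s,t))"
    and "s \<in> S" "s islimpt S" "\<And>\<sigma>. \<sigma> \<in> S \<Longrightarrow> f (\<sigma>,t) = g (\<sigma>,t)"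
  shows "ds f (s,t) = ds g (s,t)"
  using has_vector_derivative_unique_on[OF
      has_vector_derivative_at_within[OF has_vector_derivative_ds[OF assms(1)]]
      has_vector_derivative_at_within[OF has_vector_derivative_ds[OF assms(2)]]] assms(3-5)
  by blast

lemma dt_eq_on_slice:
  assumes "f differentiable (at (s,t))" "g differentiable (at (s,t))"
    and "t \<in> S" "t islimpt S" "\<And>\<tau>. \<tau> \<in> S \<Longrightarrow> f (s,\<tau>) = g (s,\<tau>)"
  shows "dt f (s,t) = dt g (s,t)"
  using has_vector_derivative_unique_on[OF
      has_vector_derivative_at_within[OF has_vector_derivative_dt[OF assms(1)]]
      has_vector_derivative_at_within[OF has_vector_derivative_dt[OF assms(2)]]] assms(3-5)
  by blast

lemma ds_eqI: "((\<lambda>\<sigma>. f (\<sigma>,t)) has_vector_derivative D) (at s) \<Longrightarrow> ds f (s,t) = D"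
  by (simp add: ds_def vector_derivative_at)

lemma dt_eqI: "((\<lambda>\<tau>. f (s,\<tau>)) has_vector_derivative D) (at t) \<Longrightarrow> dt f (s,t) = D"
  by (simp add: dt_def vector_derivative_at)

lemma ds_add:
  assumes "f differentiable (at (s,t))" "g differentiable (at (s,t))"
  shows "ds (\<lambda>q. f q + g q) (s,t) = ds f (s,t) + ds g (s,t)"
  using assms by (intro ds_eqI has_vector_derivative_add has_vector_derivative_ds)

lemma ds_diff:
  assumes "f differentiable (at (s,t))" "g differentiable (at (s,t))"
  shows "ds (\<lambda>q. f q - g q) (s,t) = ds f (s,t) - ds g (s,t)"
  using assms by (intro ds_eqI has_vector_derivative_diff has_vector_derivative_ds)

lemma ds_scaleR:
  fixes a :: "real \<times> real \<Rightarrow> real"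
  assumes "a differentiable (at (s,t))" "f differentiable (at (s,t))"
  shows "ds (\<lambda>q. a q *\<^sub>R f q) (s,t) = ds a (s,t) *\<^sub>R f (s,t) + a (s,t) *\<^sub>R ds f (s,t)"
proof (rule ds_eqI)
  have "((\<lambda>\<sigma>. a (\<sigma>,t)) has_real_derivative ds a (s,t)) (at s)"
    using has_vector_derivative_ds[OF assms(1)] by (simp add: has_real_derivative_iff_has_vector_derivative)
  from has_vector_derivative_scaleR[OF this has_vector_derivative_ds[OF assms(2)]]
  show "((\<lambda>\<sigma>. a (\<sigma>,t) *\<^sub>R f (\<sigma>,t)) has_vector_derivative ds a (s,t) *\<^sub>R f (s,t) + a (s,t) *\<^sub>R ds f (s,t)) (at s)"
    by (simp add: add.commute)
qed

lemma open_contains_rectangle: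
  fixes U :: "(real \<times> real) set"
  assumes "open U" "(s,t) \<in> U"
  obtains a b c d where "{a..b} \<times> {c..d} \<subseteq> U" "a < s" "s < b" "c < t" "t < d"
proof -
  obtain x y where "cbox x y \<subseteq> U" "(s,t) \<in> box x y"
    using open_contains_cbox[OF assms] by metis
  then show ?thesis
    using that[of "fst x" "fst y" "snd x" "snd y"]
    by (cases x, cases y) (auto simp: mem_box Basis_prod_def cbox_Pair_eq)
qed

lemma smooth_on_ds: "smooth_on U f \<Longrightarrow> smooth_on U (ds f)"
  unfolding smooth_on_def by (metis Ck_on.simps(2))

lemma smooth_on_dt: "smooth_on U f \<Longrightarrow> smooth_on U (dt f)"
  unfolding smooth_on_def by (metis Ck_on.simps(2))

lemma smooth_on_imp_Ck_on: "smooth_on U f \<Longrightarrow> Ck_on k U f"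
  unfolding smooth_on_def by blast

lemma smooth_on_imp_differentiable:
  "smooth_on U f \<Longrightarrow> open U \<Longrightarrow> p \<in> U \<Longrightarrow> f differentiable (at p)"
  using smooth_on_imp_Ck_on[of U f 1] by (simp add: differentiable_on_eq_differentiable_at)

lemma has_integral_ds:
  fixes f :: "real \<times> real \<Rightarrow> 'a::banach"
  assumes "a \<le> b" "\<And>\<sigma>. \<sigma> \<in> {a..b} \<Longrightarrow> f differentiable (at (\<sigma>,t))"
  shows "((\<lambda>\<sigma>. ds f (\<sigma>,t)) has_integral f (b,t) - f (a,t)) {a..b}"
proof (rule fundamental_theorem_of_calculus[OF \<open>a \<le> b\<close>])
  show "((\<lambda>\<sigma>. f (\<sigma>,t)) has_vector_derivative ds f (\<sigma>,t)) (at \<sigma> within {a..b})" if "\<sigma> \<in> {a..b}" for \<sigma>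
    using assms(2)[OF that] by (rule has_vector_derivative_at_within[OF has_vector_derivative_ds])
qed

lemma continuous_on_slice:
  "continuous_on U f \<Longrightarrow> {a..b} \<times> {t} \<subseteq> U \<Longrightarrow> continuous_on {a..b} (\<lambda>\<sigma>. f (\<sigma>,t))"
  by (erule continuous_on_compose2) (auto intro: continuous_on_Pair continuous_on_id continuous_on_const)

lemma dt_diff_eq_integral_dt_ds:
  fixes f :: "real \<times> real \<Rightarrow> 'a::banach"
  assumes f: "Ck_on 2 U f" and U: "open U" "{a..b} \<times> {c..d} \<subseteq> U"
    and "a \<le> b" "c < d" "t \<in> {c..d}"
  shows "dt f (b,t) - dt f (a,t) = integral {a..b} (\<lambda>\<sigma>. dt (ds f) (\<sigma>,t))"
proof -
  have inU: "(\<sigma>,\<tau>) \<in> U" if "\<sigma> \<in> {a..b}" "\<tau> \<in> {c..d}" for \<sigma> \<tau>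
    using U(2) that by blast
  have diff: "f differentiable (at q)" "ds f differentiable (at q)" if "q \<in> U" for q
    using f U(1) that by (auto simp: numeral_2_eq_2 differentiable_on_eq_differentiable_at)
  have cont: "continuous_on U (dt (ds f))"
    using f by (simp add: numeral_2_eq_2)
  have ftc: "((\<lambda>\<sigma>. ds f (\<sigma>,\<tau>)) has_integral f (b,\<tau>) - f (a,\<tau>)) {a..b}" if "\<tau> \<in> {c..d}" for \<tau>
    using diff(1) inU that by (intro has_integral_ds[OF \<open>a \<le> b\<close>]) auto
  have leibniz: "((\<lambda>\<tau>. integral (cbox a b) (\<lambda>\<sigma>. ds f (\<sigma>,\<tau>))) has_vector_derivative
      integral (cbox a b) (\<lambda>\<sigma>. dt (ds f) (\<sigma>,t))) (at t within {c..d})"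
  proof (rule leibniz_rule_vector_derivative)
    show "((\<lambda>\<tau>. ds f (\<sigma>,\<tau>)) has_vector_derivative dt (ds f) (\<sigma>,\<tau>)) (at \<tau> within {c..d})"
      if "\<tau> \<in> {c..d}" "\<sigma> \<in> cbox a b" for \<tau> \<sigma>
      using diff(2) inU that by (auto intro!: has_vector_derivative_at_within[OF has_vector_derivative_dt])
    show "(\<lambda>\<sigma>. ds f (\<sigma>,\<tau>)) integrable_on cbox a b" if "\<tau> \<in> {c..d}" for \<tau>
      using ftc[OF that] by (auto simp: cbox_interval)
    have "continuous_on ({c..d} \<times> cbox a b) (dt (ds f) \<circ> prod.swap)"
      using U(2) by (intro continuous_on_compose continuous_intros continuous_on_subset[OF cont]) auto
    then show "continuous_on ({c..d} \<times> cbox a b) (\<lambda>(\<tau>,\<sigma>). dt (ds f) (\<sigma>,\<tau>))"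
      by (simp add: o_def case_prod_unfold prod.swap_def)
  qed (use \<open>t \<in> {c..d}\<close> in auto)
  have "((\<lambda>\<tau>. f (b,\<tau>) - f (a,\<tau>)) has_vector_derivative dt f (b,t) - dt f (a,t)) (at t within {c..d})"
    using diff(1) inU \<open>a \<le> b\<close> \<open>t \<in> {c..d}\<close>
    by (auto intro!: has_vector_derivative_at_within[OF has_vector_derivative_diff] has_vector_derivative_dt)
  from has_vector_derivative_unique_on[OF this leibniz[unfolded cbox_interval]]
  show ?thesis
    using \<open>c < d\<close> \<open>t \<in> {c..d}\<close> ftc by (simp add: integral_unique[symmetric])
qed

lemma ds_dt_eq_dt_ds:
  fixes f :: "real \<times> real \<Rightarrow> 'a::banach"
  assumes f: "Ck_on 2 U f" and "open U" "(s,t) \<in> U"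
  shows "ds (dt f) (s,t) = dt (ds f) (s,t)"
proof -
  obtain a b c d where rect: "{a..b} \<times> {c..d} \<subseteq> U" and "a < s" "s < b" "c < t" "t < d"
    using open_contains_rectangle[OF \<open>open U\<close> \<open>(s,t) \<in> U\<close>] by metis
  have "dt f differentiable (at (s,t))"
    using f assms(2,3) by (auto simp: numeral_2_eq_2 differentiable_on_eq_differentiable_at)
  then have lhs: "((\<lambda>\<sigma>. dt f (\<sigma>,t) - dt f (a,t)) has_vector_derivative ds (dt f) (s,t) - 0) (at s within {a..b})"
    by (intro has_vector_derivative_at_within[OF has_vector_derivative_diff] has_vector_derivative_ds
        has_vector_derivative_const)
  have "continuous_on {a..b} (\<lambda>\<sigma>. dt (ds f) (\<sigma>,t))"
    using f rect \<open>c < t\<close> \<open>t < d\<close> by (intro continuous_on_slice[of U]) (auto simp: numeral_2_eq_2)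
  then have rhs: "((\<lambda>\<sigma>. integral {a..\<sigma>} (\<lambda>\<sigma>. dt (ds f) (\<sigma>,t))) has_vector_derivative dt (ds f) (s,t)) (at s within {a..b})"
    using \<open>a < s\<close> \<open>s < b\<close> by (intro integral_has_vector_derivative) auto
  have "dt f (\<sigma>,t) - dt f (a,t) = integral {a..\<sigma>} (\<lambda>\<sigma>. dt (ds f) (\<sigma>,t))" if "\<sigma> \<in> {a..b}" for \<sigma>
    using rect that \<open>c < t\<close> \<open>t < d\<close> by (intro dt_diff_eq_integral_dt_ds[OF f \<open>open U\<close>]) auto
  with has_vector_derivative_unique_on[OF lhs rhs] show ?thesis
    using \<open>a < s\<close> \<open>s < b\<close> by simp
qed

lemma linner_simps:
  "linner (x + y) z = linner x z + linner y z" "linner z (x + y) = linner z x + linner z y"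
  "linner (x - y) z = linner x z - linner y z" "linner z (x - y) = linner z x - linner z y"
  "linner (c *\<^sub>R x) z = c * linner x z" "linner z (c *\<^sub>R x) = c * linner z x"
  "linner (- x) z = - linner x z" "linner z (- x) = - linner z x"
  "linner 0 z = 0" "linner z 0 = 0"
  by (simp_all add: linner_def algebra_simps)

lemma linner_commute: "linner x y = linner y x"
  by (simp add: linner_def algebra_simps)

lemma bounded_bilinear_linner: "bounded_bilinear linner"
proof
  show "\<exists>K. \<forall>x y. norm (linner x y) \<le> norm x * norm y * K"
  proof (intro exI allI)
    fix x y :: "real^4"
    have "\<bar>x$i * y$i\<bar> \<le> norm x * norm y" for i
      unfolding abs_mult by (intro mult_mono component_le_norm_cart) auto
    from this[of 1] this[of 2] this[of 3] this[of 4]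
    show "norm (linner x y) \<le> norm x * norm y * 4"
      by (auto simp: linner_def split: abs_split)
  qed
qed (simp_all add: linner_simps)

lemma differentiable_linner:
  "f differentiable (at x within S) \<Longrightarrow> g differentiable (at x within S) \<Longrightarrow>
    (\<lambda>x. linner (f x) (g x)) differentiable (at x within S)"
  unfolding differentiable_def by (blast intro: bounded_bilinear.FDERIV[OF bounded_bilinear_linner])

lemma dt_linner:
  assumes "f differentiable (at (s,t))" "g differentiable (at (s,t))"
  shows "dt (\<lambda>q. linner (f q) (g q)) (s,t) = linner (dt f (s,t)) (g (s,t)) + linner (f (s,t)) (dt g (s,t))"
  using bounded_bilinear.has_vector_derivative[OF bounded_bilinear_linner
      has_vector_derivative_dt[OF assms(1)] has_vector_derivative_dt[OF assms(2)]]
  by (intro dt_eqI) (simp add: add.commute)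

lemma linner_self_const_imp_orthogonal:
  assumes "(F has_vector_derivative F') (at t)" "t \<in> S" "t islimpt S"
    and "\<And>\<tau>. \<tau> \<in> S \<Longrightarrow> linner (F \<tau>) (F \<tau>) = c"
  shows "linner (F t) F' = 0"
proof -
  have "linner (F t) F' + linner F' (F t) = 0"
    using has_vector_derivative_unique_on[OF
        has_vector_derivative_at_within[OF bounded_bilinear.has_vector_derivative[OF
          bounded_bilinear_linner assms(1) assms(1)]]
        has_vector_derivative_const] assms(2-4) by blast
  then show ?thesis
    by (simp add: linner_commute)
qed

definition partially_null_frame :: "real^4 \<Rightarrow> real^4 \<Rightarrow> real^4 \<Rightarrow> real^4 \<Rightarrow> bool" where
  "partially_null_frame T N B1 B2 \<longleftrightarrow>
     linner T T = 1 \<and> linner N N = 1 \<and>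
     linner B1 B1 = 0 \<and> linner B2 B2 = 0 \<and> linner B1 B2 = 1 \<and>
     linner T N = 0 \<and> linner T B1 = 0 \<and> linner T B2 = 0 \<and>
     linner N B1 = 0 \<and> linner N B2 = 0"

lemma partially_null_frame_coeffs:
  assumes "partially_null_frame T N B1 B2"
  shows "linner (a *\<^sub>R T + b *\<^sub>R N + c *\<^sub>R B1 + d *\<^sub>R B2) T = a"
    and "linner (a *\<^sub>R T + b *\<^sub>R N + c *\<^sub>R B1 + d *\<^sub>R B2) N = b"
proof -
  have "linner N T = 0" "linner B1 T = 0" "linner B2 T = 0" "linner B1 N = 0" "linner B2 N = 0"
    using assms unfolding partially_null_frame_def by (metis linner_commute)+
  with assms show "linner (a *\<^sub>R T + b *\<^sub>R N + c *\<^sub>R B1 + d *\<^sub>R B2) T = a"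
    and "linner (a *\<^sub>R T + b *\<^sub>R N + c *\<^sub>R B1 + d *\<^sub>R B2) N = b"
    by (simp_all add: partially_null_frame_def linner_simps)
qed

lemma ds_frenet_combination:
  fixes a b c d :: "real \<times> real \<Rightarrow> real" and T N B1 B2 :: "real \<times> real \<Rightarrow> 'a::real_normed_vector"
  assumes diff: "a differentiable (at p)" "b differentiable (at p)" "c differentiable (at p)"
      "d differentiable (at p)" "T differentiable (at p)" "N differentiable (at p)"
      "B1 differentiable (at p)" "B2 differentiable (at p)"
    and frenet: "ds T p = \<kappa>\<^sub>1 *\<^sub>R N p" "ds N p = - \<kappa>\<^sub>1 *\<^sub>R T p + \<kappa>\<^sub>2 *\<^sub>R B1 p"
      "ds B1 p = 0" "ds B2 p = - \<kappa>\<^sub>2 *\<^sub>R N p"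
  shows "ds (\<lambda>q. a q *\<^sub>R T q + b q *\<^sub>R N q + c q *\<^sub>R B1 q + d q *\<^sub>R B2 q) p =
    (ds a p - b p * \<kappa>\<^sub>1) *\<^sub>R T p + (a p * \<kappa>\<^sub>1 + ds b p - d p * \<kappa>\<^sub>2) *\<^sub>R N p
    + (b p * \<kappa>\<^sub>2 + ds c p) *\<^sub>R B1 p + ds d p *\<^sub>R B2 p"
proof -
  obtain s t where p: "p = (s,t)" by fastforce
  show ?thesis
    using diff unfolding p
    by (simp add: ds_add ds_scaleR frenet[unfolded p] algebra_simps)
qed

locale partially_null_variation =
  fixes l w :: real and U :: "(real \<times> real) set"
    and \<gamma> T N B1 B2 :: "real \<times> real \<Rightarrow> real^4"
    and k1 k2 \<beta>1 \<beta>2 \<beta>3 \<beta>4 :: "real \<times> real \<Rightarrow> real"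
  assumes l: "l > 0" and w: "w > 0"
    and U: "open U" "{0..l} \<times> {0..<w} \<subseteq> U"
    and smooth: "smooth_on U \<gamma>" "smooth_on U T" "smooth_on U N" "smooth_on U B1" "smooth_on U B2"
      "smooth_on U k1" "smooth_on U k2"
      "smooth_on U \<beta>1" "smooth_on U \<beta>2" "smooth_on U \<beta>3" "smooth_on U \<beta>4"
    and tangent: "\<And>p. p \<in> {0..l} \<times> {0..<w} \<Longrightarrow> T p = ds \<gamma> p"
    and frame: "\<And>p. p \<in> {0..l} \<times> {0..<w} \<Longrightarrow> partially_null_frame (T p) (N p) (B1 p) (B2 p)"
    and frenet: "\<And>p. p \<in> {0..l} \<times> {0..<w} \<Longrightarrow> ds T p = k1 p *\<^sub>R N p"
      "\<And>p. p \<in> {0..l} \<times> {0..<w} \<Longrightarrow> ds N p = - k1 p *\<^sub>R T p + k2 p *\<^sub>R B1 p"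
      "\<And>p. p \<in> {0..l} \<times> {0..<w} \<Longrightarrow> ds B1 p = 0"
      "\<And>p. p \<in> {0..l} \<times> {0..<w} \<Longrightarrow> ds B2 p = - k2 p *\<^sub>R N p"
    and variation: "\<And>p. p \<in> {0..l} \<times> {0..<w} \<Longrightarrow>
      dt \<gamma> p = \<beta>1 p *\<^sub>R T p + \<beta>2 p *\<^sub>R N p + \<beta>3 p *\<^sub>R B1 p + \<beta>4 p *\<^sub>R B2 p"
begin

lemma differentiable_at:
  "smooth_on U f \<Longrightarrow> p \<in> {0..l} \<times> {0..<w} \<Longrightarrow> f differentiable (at p)"
  using smooth_on_imp_differentiable U by blast

lemmas differentiable_intros = differentiable_at smooth smooth_on_ds smooth_on_dt

lemma dt_tangent:
  assumes st: "(s,t) \<in> {0..l} \<times> {0..<w}"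
  shows "dt T (s,t) = (ds \<beta>1 (s,t) - \<beta>2 (s,t) * k1 (s,t)) *\<^sub>R T (s,t)
    + (\<beta>1 (s,t) * k1 (s,t) + ds \<beta>2 (s,t) - \<beta>4 (s,t) * k2 (s,t)) *\<^sub>R N (s,t)
    + (\<beta>2 (s,t) * k2 (s,t) + ds \<beta>3 (s,t)) *\<^sub>R B1 (s,t) + ds \<beta>4 (s,t) *\<^sub>R B2 (s,t)"
    (is "_ = ?W")
proof -
  have stU: "(s,t) \<in> U"
    using st U(2) by blast
  have "dt T (s,t) = dt (ds \<gamma>) (s,t)"
    using st w tangent by (intro dt_eq_on_slice[where S="{0..<w}"]) (auto intro!: differentiable_intros)
  also have "\<dots> = ds (dt \<gamma>) (s,t)"
    using ds_dt_eq_dt_ds[OF smooth_on_imp_Ck_on[OF smooth(1)] U(1) stU] by simp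
  also have "\<dots> = ds (\<lambda>q. \<beta>1 q *\<^sub>R T q + \<beta>2 q *\<^sub>R N q + \<beta>3 q *\<^sub>R B1 q + \<beta>4 q *\<^sub>R B2 q) (s,t)"
    using st l variation
    by (intro ds_eq_on_slice[where S="{0..l}"]) (auto intro!: differentiable_intros derivative_intros)
  also have "\<dots> = ?W"
    using st by (intro ds_frenet_combination frenet) (auto intro!: differentiable_intros)
  finally show ?thesis .
qed

lemma unit_orthogonal_dt:
  assumes st: "(s,t) \<in> {0..l} \<times> {0..<w}"
  shows "linner (T (s,t)) (dt T (s,t)) = 0" and "linner (N (s,t)) (dt N (s,t)) = 0"
proof -
  have "linner (T (s,\<tau>)) (T (s,\<tau>)) = 1" "linner (N (s,\<tau>)) (N (s,\<tau>)) = 1" if "\<tau> \<in> {0..<w}" for \<tau>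
    using frame[of "(s,\<tau>)"] st that by (auto simp: partially_null_frame_def)
  with st w show "linner (T (s,t)) (dt T (s,t)) = 0" "linner (N (s,t)) (dt N (s,t)) = 0"
    by (auto intro!: linner_self_const_imp_orthogonal[where S="{0..<w}"] has_vector_derivative_dt
        differentiable_intros)
qed

lemma ds_beta1:
  assumes "(s,t) \<in> {0..l} \<times> {0..<w}"
  shows "ds \<beta>1 (s,t) = \<beta>2 (s,t) * k1 (s,t)"
  using unit_orthogonal_dt(1)[OF assms] partially_null_frame_coeffs(1)[OF frame[OF assms]]
  by (simp add: dt_tangent[OF assms] linner_commute)

lemma dt_k1_eq_linner:
  assumes st: "(s,t) \<in> {0..l} \<times> {0..<w}"
  shows "dt k1 (s,t) = linner (dt (ds T) (s,t)) (N (s,t))"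
proof -
  have "k1 q = linner (ds T q) (N q)" if "q \<in> {0..l} \<times> {0..<w}" for q
    using frenet(1)[OF that] frame[OF that] by (simp add: linner_simps partially_null_frame_def)
  then have "dt k1 (s,t) = dt (\<lambda>q. linner (ds T q) (N q)) (s,t)"
    using st w by (intro dt_eq_on_slice[where S="{0..<w}"])
      (auto intro!: differentiable_intros differentiable_linner)
  also have "\<dots> = linner (dt (ds T) (s,t)) (N (s,t)) + linner (ds T (s,t)) (dt N (s,t))"
    using st by (intro dt_linner) (auto intro!: differentiable_intros)
  also have "linner (ds T (s,t)) (dt N (s,t)) = 0"
    using unit_orthogonal_dt(2)[OF st] by (simp add: frenet(1)[OF st] linner_simps)
  finally show ?thesis
    by simp
qed

lemma dt_k1:
  assumes st: "(s,t) \<in> {0..l} \<times> {0..<w}"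
  shows "dt k1 (s,t) = ds (ds \<beta>2) (s,t) + ds (\<lambda>q. \<beta>1 q * k1 q) (s,t) - ds (\<lambda>q. \<beta>4 q * k2 q) (s,t)
    - ds \<beta>4 (s,t) * k2 (s,t)"
proof -
  define a where "a q = ds \<beta>1 q - \<beta>2 q * k1 q" for q
  define b where "b q = \<beta>1 q * k1 q + ds \<beta>2 q - \<beta>4 q * k2 q" for q
  define c where "c q = \<beta>2 q * k2 q + ds \<beta>3 q" for q
  have stU: "(s,t) \<in> U"
    using st U(2) by blast
  have "dt k1 (s,t) = linner (ds (dt T) (s,t)) (N (s,t))"
    using dt_k1_eq_linner[OF st] ds_dt_eq_dt_ds[OF smooth_on_imp_Ck_on[OF smooth(2)] U(1) stU] by simp
  also have "ds (dt T) (s,t) = ds (\<lambda>q. a q *\<^sub>R T q + b q *\<^sub>R N q + c q *\<^sub>R B1 q + ds \<beta>4 q *\<^sub>R B2 q) (s,t)"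
    using st l dt_tangent unfolding a_def b_def c_def
    by (intro ds_eq_on_slice[where S="{0..l}"]) (auto intro!: differentiable_intros derivative_intros)
  also have "\<dots> = (ds a (s,t) - b (s,t) * k1 (s,t)) *\<^sub>R T (s,t)
      + (a (s,t) * k1 (s,t) + ds b (s,t) - ds \<beta>4 (s,t) * k2 (s,t)) *\<^sub>R N (s,t)
      + (b (s,t) * k2 (s,t) + ds c (s,t)) *\<^sub>R B1 (s,t) + ds (ds \<beta>4) (s,t) *\<^sub>R B2 (s,t)"
    using st unfolding a_def b_def c_def
    by (intro ds_frenet_combination frenet) (auto intro!: differentiable_intros derivative_intros)
  finally have "dt k1 (s,t) = a (s,t) * k1 (s,t) + ds b (s,t) - ds \<beta>4 (s,t) * k2 (s,t)"
    using partially_null_frame_coeffs(2)[OF frame[OF st]] by simp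
  moreover have "a (s,t) = 0"
    using ds_beta1[OF st] by (simp add: a_def)
  moreover have "ds b (s,t) = ds (\<lambda>q. \<beta>1 q * k1 q) (s,t) + ds (ds \<beta>2) (s,t) - ds (\<lambda>q. \<beta>4 q * k2 q) (s,t)"
    using st unfolding b_def
    by (simp add: ds_add ds_diff differentiable_intros)
  ultimately show ?thesis
    by simp
qed

end

theorem theorem3p6:
  fixes l w :: real and U :: "(real \<times> real) set"
    and \<gamma> T N B1 B2 :: "real \<times> real \<Rightarrow> real^4"
    and k1 k2 \<beta>1 \<beta>2 \<beta>3 \<beta>4 :: "real \<times> real \<Rightarrow> real"
  assumes l: "l > 0" and w: "w > 0"
    and U: "open U" "{0..l} \<times> {0..<w} \<subseteq> U"
    and smooth: "smooth_on U \<gamma>" "smooth_on U T" "smooth_on U N" "smooth_on U B1" "smooth_on U B2"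
       "smooth_on U k1" "smooth_on U k2"
       "smooth_on U \<beta>1" "smooth_on U \<beta>2" "smooth_on U \<beta>3" "smooth_on U \<beta>4"
    and arclength: "\<And>p. p \<in> {0..l} \<times> {0..<w} \<Longrightarrow> lnorm (ds \<gamma> p) = 1"
    and tangent: "\<And>p. p \<in> {0..l} \<times> {0..<w} \<Longrightarrow> T p = ds \<gamma> p"
    and frame: "\<And>p. p \<in> {0..l} \<times> {0..<w} \<Longrightarrow>
        linner (T p) (T p) = 1 \<and> linner (N p) (N p) = 1 \<and>
        linner (B1 p) (B1 p) = 0 \<and> linner (B2 p) (B2 p) = 0 \<and> linner (B1 p) (B2 p) = 1 \<and>
        linner (T p) (N p) = 0 \<and> linner (T p) (B1 p) = 0 \<and> linner (T p) (B2 p) = 0 \<and>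
        linner (N p) (B1 p) = 0 \<and> linner (N p) (B2 p) = 0"
    and frenet: "\<And>p. p \<in> {0..l} \<times> {0..<w} \<Longrightarrow>
        ds T p = k1 p *\<^sub>R N p \<and>
        ds N p = - k1 p *\<^sub>R T p + k2 p *\<^sub>R B1 p \<and>
        ds B1 p = 0 *\<^sub>R B1 p \<and>
        ds B2 p = - k2 p *\<^sub>R N p - 0 *\<^sub>R B2 p"
    and inextensible: "\<And>p. p \<in> {0..l} \<times> {0..<w} \<Longrightarrow> dt (\<lambda>q. lnorm (ds \<gamma> q)) p = 0"
    and variation: "\<And>p. p \<in> {0..l} \<times> {0..<w} \<Longrightarrow>
        dt \<gamma> p = \<beta>1 p *\<^sub>R T p + \<beta>2 p *\<^sub>R N p + \<beta>3 p *\<^sub>R B1 p + \<beta>4 p *\<^sub>R B2 p"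
  shows "\<And>p. p \<in> {0..l} \<times> {0..<w} \<Longrightarrow>
     dt k1 p = ds (ds \<beta>2) p + ds (\<lambda>q. \<beta>1 q * k1 q) p - ds (\<lambda>q. \<beta>4 q * k2 q) p
               - ds \<beta>4 p * k2 p"
proof -
  interpret partially_null_variation l w U \<gamma> T N B1 B2 k1 k2 \<beta>1 \<beta>2 \<beta>3 \<beta>4
    using l w U smooth tangent frame frenet variation
    by unfold_locales (auto simp: partially_null_frame_def)
  show "dt k1 p = ds (ds \<beta>2) p + ds (\<lambda>q. \<beta>1 q * k1 q) p - ds (\<lambda>q. \<beta>4 q * k2 q) p - ds \<beta>4 p * k2 p"
    if "p \<in> {0..l} \<times> {0..<w}" for p
    using dt_k1[of "fst p" "snd p"] that by simp
qed

end
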